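(* The critical push-pull network (i.e. the push-pull network with $\lambda_1=\mu_1$ and $\lambda_2=\mu_2$) is non-stabilizable: there is no deterministic stationary non-idling policy under which the associated Markov jump process has a positive recurrent class that is entered with probability $1$.
   Context: The push-pull network has two servers and two job streams $i=1,2$, with strictly positive rates $\lambda_1,\lambda_2,\mu_1,\mu_2$. The state is $(x_1,x_2)\in\mathcal{S}=\mathbb{Z}_+^2$, where $x_i$ is the number of jobs in queue $i$. Server 1 can either "push" on stream 1 (an operation completing at exponential rate $\lambda_1$ and adding one job to queue 1) or "pull" from queue 2 (completing at exponential rate $\mu_2$ and removing one job from queue 2; allowed only if $x_2>0$). Server 2 can either "push" on stream 2 (rate $\lambda_2$, adds a job to queue 2) or "pull" from queue 1 (rate $\mu_1$, removes a job from queue 1; allowed only if $x_1>0$). Pushing is always possible. Operation durations are exponential, preemption is allowed, and durations are not known at commencement. A (deterministic, stationary) non-idling policy is a function $\mathcal{P}:\mathcal{S}\to\{\text{push},\text{pull}\}^2$ giving the actions of (server 1, server 2), with $\mathcal{P}((x,0))\in\{\text{push}\}\times\{\text{push},\text{pull}\}$ and $\mathcal{P}((0,x))\in\{\text{push},\text{pull}\}\times\{\text{push}\}$ for all integers $x\ge 0$. Given $\mathcal{P}$, in state $(x_1,x_2)$ the two active operations run simultaneously at their respective exponential rates and the state jumps according to whichever completes first; this defines a Markov jump process on $\mathcal{S}$. The network controlled by $\mathcal{P}$ is stable if this Markov jump process has a positive recurrent class which the process enters with probability 1; the network is stabilizable if some non-idling policy makes it stable, and non-stabilizable otherwise. *)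

theory Defs
  imports "HOL-Analysis.Analysis"
begin

text \<open>A Markov jump process on a countable state space is described by its
transition rates Q s t (rate of jumping from s to t, for t different from s).
We describe it through its embedded jump chain and its holding rates.\<close>

definition exit_rate :: "('s \<Rightarrow> 's \<Rightarrow> real) \<Rightarrow> 's \<Rightarrow> real" where
  "exit_rate Q s = (\<Sum>\<^sub>\<infinity>t\<in>UNIV - {s}. Q s t)"

definition jump_prob :: "('s \<Rightarrow> 's \<Rightarrow> real) \<Rightarrow> 's \<Rightarrow> 's \<Rightarrow> real" where
  "jump_prob Q s t = (if t = s then 0 else Q s t / exit_rate Q s)"

text \<open>taboo Q x n z = probability that the jump chain started in x is in z at
step n and has not visited x at steps 1..n.\<close>
fun taboo :: "('s \<Rightarrow> 's \<Rightarrow> real) \<Rightarrow> 's \<Rightarrow> nat \<Rightarrow> 's \<Rightarrow> real" where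
  "taboo Q x 0 z = (if z = x then 1 else 0)"
| "taboo Q x (Suc n) z =
     (if z = x then 0 else (\<Sum>\<^sub>\<infinity>w. taboo Q x n w * jump_prob Q w z))"

text \<open>Probability of first return to x at jump number n+1.\<close>
definition first_return :: "('s \<Rightarrow> 's \<Rightarrow> real) \<Rightarrow> 's \<Rightarrow> nat \<Rightarrow> real" where
  "first_return Q x n = (\<Sum>\<^sub>\<infinity>w. taboo Q x n w * jump_prob Q w x)"

definition recurrent_state :: "('s \<Rightarrow> 's \<Rightarrow> real) \<Rightarrow> 's \<Rightarrow> bool" where
  "recurrent_state Q x \<longleftrightarrow> first_return Q x sums 1"

text \<open>Expected (continuous) return time to x: the sum of the expected holding
times 1 / exit_rate of the states visited at jumps 0, ..., T-1 where T is the
return jump; x is positive recurrent iff it is recurrent and this expectation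
is finite.\<close>
definition positive_recurrent_state :: "('s \<Rightarrow> 's \<Rightarrow> real) \<Rightarrow> 's \<Rightarrow> bool" where
  "positive_recurrent_state Q x \<longleftrightarrow>
     recurrent_state Q x \<and>
     summable (\<lambda>n. (\<Sum>\<^sub>\<infinity>z. taboo Q x n z / exit_rate Q z))"

definition accessible :: "('s \<Rightarrow> 's \<Rightarrow> real) \<Rightarrow> 's \<Rightarrow> 's \<Rightarrow> bool" where
  "accessible Q = (\<lambda>a b. a \<noteq> b \<and> Q a b > 0)\<^sup>*\<^sup>*"

definition positive_recurrent_class :: "('s \<Rightarrow> 's \<Rightarrow> real) \<Rightarrow> 's set \<Rightarrow> bool" where
  "positive_recurrent_class Q C \<longleftrightarrow>
     (\<exists>x. C = {y. accessible Q x y \<and> accessible Q y x}) \<and>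
     (\<forall>y\<in>C. positive_recurrent_state Q y)"

text \<open>first_hit Q C n y = probability that the process started in y enters C
for the first time at jump n.\<close>
fun first_hit :: "('s \<Rightarrow> 's \<Rightarrow> real) \<Rightarrow> 's set \<Rightarrow> nat \<Rightarrow> 's \<Rightarrow> real" where
  "first_hit Q C 0 y = (if y \<in> C then 1 else 0)"
| "first_hit Q C (Suc n) y =
     (if y \<in> C then 0 else (\<Sum>\<^sub>\<infinity>w. jump_prob Q y w * first_hit Q C n w))"

definition entered_surely :: "('s \<Rightarrow> 's \<Rightarrow> real) \<Rightarrow> 's set \<Rightarrow> bool" where
  "entered_surely Q C \<longleftrightarrow> (\<forall>y. (\<lambda>n. first_hit Q C n y) sums 1)"

definition stable_process :: "('s \<Rightarrow> 's \<Rightarrow> real) \<Rightarrow> bool" where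
  "stable_process Q \<longleftrightarrow> (\<exists>C. positive_recurrent_class Q C \<and> entered_surely Q C)"

datatype action = Push | Pull

type_synonym state = "nat \<times> nat"
type_synonym policy = "state \<Rightarrow> action \<times> action"

definition non_idling :: "policy \<Rightarrow> bool" where
  "non_idling P \<longleftrightarrow> (\<forall>x. fst (P (x, 0)) = Push \<and> snd (P (0, x)) = Push)"

text \<open>Transition rates of the network controlled by P (rates l1 = lambda_1,
l2 = lambda_2, m1 = mu_1, m2 = mu_2).  Server 1: push adds to queue 1 (rate l1),
pull removes from queue 2 (rate m2); server 2: push adds to queue 2 (rate l2),
pull removes from queue 1 (rate m1).\<close>
definition pp_rate :: "real \<Rightarrow> real \<Rightarrow> real \<Rightarrow> real \<Rightarrow> policy \<Rightarrow> state \<Rightarrow> state \<Rightarrow> real" where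
  "pp_rate l1 l2 m1 m2 P s t =
     (case s of (a, b) \<Rightarrow>
       (if fst (P (a, b)) = Push then (if t = (a + 1, b) then l1 else 0)
        else (if t = (a, b - 1) then m2 else 0))
     + (if snd (P (a, b)) = Push then (if t = (a, b + 1) then l2 else 0)
        else (if t = (a - 1, b) then m1 else 0)))"

definition stabilizable :: "real \<Rightarrow> real \<Rightarrow> real \<Rightarrow> real \<Rightarrow> bool" where
  "stabilizable l1 l2 m1 m2 \<longleftrightarrow>
     (\<exists>P. non_idling P \<and> stable_process (pp_rate l1 l2 m1 m2 P))"

end

theory Submission
  imports Defs
begin

text \<open>When \<open>\<lambda>\<^sub>1 = \<mu>\<^sub>1\<close> and \<open>\<lambda>\<^sub>2 = \<mu>\<^sub>2\<close>, the potential
\<open>V(x) = x\<^sub>1/\<lambda>\<^sub>1 - x\<^sub>2/\<lambda>\<^sub>2\<close> is a martingale of the embedded jump chain under every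
non-idling policy: from a state with outgoing rates \<open>r\<^sub>1, r\<^sub>2\<close> it moves by \<open>+1/r\<^sub>1\<close> or
\<open>-1/r\<^sub>2\<close> with probabilities \<open>r\<^sub>1/(r\<^sub>1+r\<^sub>2)\<close> and \<open>r\<^sub>2/(r\<^sub>1+r\<^sub>2)\<close>.
Start the chain in \<open>x\<close> and kill it on its return to \<open>x\<close>, at time \<open>T\<close>.
Then \<open>E[|V - V(x)|; T > n]\<close> is nondecreasing and positive for \<open>n \<ge> 1\<close>,
while \<open>E[(V - V(x))\<^sup>2; T > n]\<close> grows by at most \<open>P(T > n)/min(\<lambda>\<^sub>1,\<lambda>\<^sub>2)\<^sup>2\<close> per step.
If the expected return time were finite, then (the exit rates being bounded)
\<open>\<Sum> P(T > n) < \<infinity>\<close>, so the second moment stays bounded while \<open>P(T > n) \<rightarrow> 0\<close>, and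
Cauchy-Schwarz, \<open>E[|V - V(x)|; T > n]\<^sup>2 \<le> P(T > n) E[(V - V(x))\<^sup>2; T > n]\<close>,
drives the first moment to \<open>0\<close>. So no state is positive recurrent.\<close>

lemma infsum_eq_sum_finite_support:
  fixes f :: "'a \<Rightarrow> real"
  assumes "finite S" and "\<And>x. x \<notin> S \<Longrightarrow> f x = 0"
  shows "infsum f A = sum f (A \<inter> S)"
proof -
  have "infsum f A = infsum f (A \<inter> S)"
    by (rule infsum_cong_neutral) (auto simp: assms)
  then show ?thesis
    using assms(1) by simp
qed

lemma two_point_mean:
  fixes a b c :: real
  assumes "a > 0" and "b > 0"
  shows "a / (a + b) * (c + 1 / a) + b / (a + b) * (c - 1 / b) = c"
proof -
  have "a + b \<noteq> 0" using assms by simp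
  then show ?thesis using assms by (simp add: divide_simps) (simp add: algebra_simps)
qed

lemma two_point_second_moment:
  fixes a b c :: real
  assumes "a > 0" and "b > 0"
  shows "a / (a + b) * (c + 1 / a)\<^sup>2 + b / (a + b) * (c - 1 / b)\<^sup>2 = c\<^sup>2 + 1 / (a * b)"
proof -
  have "a + b \<noteq> 0" using assms by simp
  then show ?thesis using assms by (simp add: divide_simps) (simp add: algebra_simps power2_eq_square)
qed

locale critical_push_pull =
  fixes l1 l2 :: real and P :: policy
  assumes l1_pos: "l1 > 0" and l2_pos: "l2 > 0" and non_idling: "non_idling P"
begin

abbreviation Q :: "state \<Rightarrow> state \<Rightarrow> real" where
  "Q \<equiv> pp_rate l1 l2 l1 l2 P"

definition move1 :: "state \<Rightarrow> state" where
  "move1 s = (if fst (P s) = Push then (fst s + 1, snd s) else (fst s, snd s - 1))"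

definition move2 :: "state \<Rightarrow> state" where
  "move2 s = (if snd (P s) = Push then (fst s, snd s + 1) else (fst s - 1, snd s))"

definition rate1 :: "state \<Rightarrow> real" where
  "rate1 s = (if fst (P s) = Push then l1 else l2)"

definition rate2 :: "state \<Rightarrow> real" where
  "rate2 s = (if snd (P s) = Push then l2 else l1)"

definition prob1 :: "state \<Rightarrow> real" where
  "prob1 s = rate1 s / (rate1 s + rate2 s)"

definition prob2 :: "state \<Rightarrow> real" where
  "prob2 s = rate2 s / (rate1 s + rate2 s)"

lemma action_neq_Push_iff [simp]: "a \<noteq> Push \<longleftrightarrow> a = Pull"
  by (cases a) auto

lemma pull1_queue2_pos: "fst (P s) = Pull \<Longrightarrow> snd s > 0"
  using non_idling unfolding non_idling_def
  by (metis action.distinct(1) gr0I prod.collapse)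

lemma pull2_queue1_pos: "snd (P s) = Pull \<Longrightarrow> fst s > 0"
  using non_idling unfolding non_idling_def
  by (metis action.distinct(1) gr0I prod.collapse)

lemma rate1_pos: "rate1 s > 0" and rate2_pos: "rate2 s > 0"
  using l1_pos l2_pos by (auto simp: rate1_def rate2_def)

lemma rates_ge_min: "min l1 l2 \<le> rate1 s" "min l1 l2 \<le> rate2 s"
  by (auto simp: rate1_def rate2_def)

lemma rate_sum_le: "rate1 s + rate2 s \<le> 2 * max l1 l2"
  by (auto simp: rate1_def rate2_def)

lemma prob_nonneg: "prob1 s \<ge> 0" "prob2 s \<ge> 0"
  using rate1_pos[of s] rate2_pos[of s] by (auto simp: prob1_def prob2_def)

lemma pp_rate_eq:
  "Q s t = (if t = move1 s then rate1 s else 0) + (if t = move2 s then rate2 s else 0)"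
  by (cases s) (auto simp: pp_rate_def move1_def move2_def rate1_def rate2_def)

lemma moves_distinct: "move1 s \<noteq> s" "move2 s \<noteq> s" "move1 s \<noteq> move2 s"
  using pull1_queue2_pos[of s] pull2_queue1_pos[of s]
  by (cases s; cases "fst (P s)"; cases "snd (P s)"; simp add: move1_def move2_def)+

lemma exit_rate_eq: "exit_rate Q s = rate1 s + rate2 s"
proof -
  have "exit_rate Q s = sum (Q s) ((UNIV - {s}) \<inter> {move1 s, move2 s})"
    unfolding exit_rate_def by (rule infsum_eq_sum_finite_support) (auto simp: pp_rate_eq)
  also have "(UNIV - {s}) \<inter> {move1 s, move2 s} = {move1 s, move2 s}"
    using moves_distinct by auto
  also have "sum (Q s) {move1 s, move2 s} = rate1 s + rate2 s"
    using moves_distinct(3)[of s] by (simp add: pp_rate_eq)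
  finally show ?thesis .
qed

lemma jump_prob_eq:
  "jump_prob Q s t = (if t = move1 s then prob1 s else 0) + (if t = move2 s then prob2 s else 0)"
  using moves_distinct[of s]
  by (auto simp: jump_prob_def exit_rate_eq prob1_def prob2_def pp_rate_eq)

lemma jump_prob_nonneg: "jump_prob Q s t \<ge> 0"
  using prob_nonneg[of s] by (simp add: jump_prob_eq)

definition reach_box :: "state \<Rightarrow> nat \<Rightarrow> state set" where
  "reach_box x n = {0..fst x + n} \<times> {0..snd x + n}"

lemma finite_reach_box: "finite (reach_box x n)"
  by (simp add: reach_box_def)

lemma start_in_reach_box: "x \<in> reach_box x n"
  by (cases x) (auto simp: reach_box_def)

lemma moves_in_reach_box:
  "w \<in> reach_box x n \<Longrightarrow> move1 w \<in> reach_box x (Suc n) \<and> move2 w \<in> reach_box x (Suc n)"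
  by (cases w) (auto simp: reach_box_def move1_def move2_def)

lemma taboo_outside_reach_box: "z \<notin> reach_box x n \<Longrightarrow> taboo Q x n z = 0"
proof (induction n arbitrary: z)
  case 0
  then show ?case using start_in_reach_box[of x 0] by auto
next
  case (Suc n)
  have "taboo Q x n w * jump_prob Q w z = 0" for w
    using Suc moves_in_reach_box[of w x n] by (cases "w \<in> reach_box x n") (auto simp: jump_prob_eq)
  then show ?case by (simp add: infsum_0)
qed

lemma taboo_Suc_reach_box:
  "taboo Q x (Suc n) z =
     (if z = x then 0 else (\<Sum>w\<in>reach_box x n. taboo Q x n w * jump_prob Q w z))"
proof -
  have "(\<Sum>\<^sub>\<infinity>w. taboo Q x n w * jump_prob Q w z)
      = (\<Sum>w\<in>UNIV \<inter> reach_box x n. taboo Q x n w * jump_prob Q w z)"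
    by (rule infsum_eq_sum_finite_support) (auto simp: finite_reach_box taboo_outside_reach_box)
  then show ?thesis by simp
qed

lemma taboo_nonneg: "taboo Q x n z \<ge> 0"
proof (induction n arbitrary: z)
  case (Suc n)
  then show ?case
    unfolding taboo_Suc_reach_box by (auto intro!: sum_nonneg mult_nonneg_nonneg jump_prob_nonneg)
qed simp

text \<open>\<open>taboo_expect x n g\<close> is \<open>E\<^sub>x[g(X\<^sub>n); T > n]\<close> for the jump chain \<open>X\<close>,
  where \<open>T\<close> is the first return time to \<open>x\<close>.\<close>

definition taboo_expect :: "state \<Rightarrow> nat \<Rightarrow> (state \<Rightarrow> real) \<Rightarrow> real" where
  "taboo_expect x n g = (\<Sum>z\<in>reach_box x n. taboo Q x n z * g z)"

abbreviation survival :: "state \<Rightarrow> nat \<Rightarrow> real" where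
  "survival x n \<equiv> taboo_expect x n (\<lambda>_. 1)"

lemma taboo_expect_0: "taboo_expect x 0 g = g x"
proof -
  have "taboo_expect x 0 g = (\<Sum>z\<in>reach_box x 0. if z = x then g z else 0)"
    unfolding taboo_expect_def by (rule sum.cong) auto
  then show ?thesis
    using start_in_reach_box[of x 0] by (simp add: finite_reach_box)
qed

lemma taboo_expect_mono: "(\<And>z. f z \<le> g z) \<Longrightarrow> taboo_expect x n f \<le> taboo_expect x n g"
  unfolding taboo_expect_def by (intro sum_mono mult_left_mono taboo_nonneg)

lemma taboo_expect_nonneg: "(\<And>z. g z \<ge> 0) \<Longrightarrow> taboo_expect x n g \<ge> 0"
  unfolding taboo_expect_def by (intro sum_nonneg mult_nonneg_nonneg taboo_nonneg)

lemma taboo_expect_Suc: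
  assumes "g x = 0"
  shows "taboo_expect x (Suc n) g = taboo_expect x n (\<lambda>w. prob1 w * g (move1 w) + prob2 w * g (move2 w))"
proof -
  have "taboo_expect x (Suc n) g
      = (\<Sum>z\<in>reach_box x (Suc n). \<Sum>w\<in>reach_box x n. taboo Q x n w * (jump_prob Q w z * g z))"
    unfolding taboo_expect_def
    by (rule sum.cong) (auto simp del: taboo.simps simp: taboo_Suc_reach_box assms sum_distrib_right mult.assoc)
  also have "\<dots> = (\<Sum>w\<in>reach_box x n. taboo Q x n w * (\<Sum>z\<in>reach_box x (Suc n). jump_prob Q w z * g z))"
    by (subst sum.swap) (simp add: sum_distrib_left)
  also have "\<dots> = taboo_expect x n (\<lambda>w. prob1 w * g (move1 w) + prob2 w * g (move2 w))"
    unfolding taboo_expect_def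
  proof (rule sum.cong)
    fix w assume "w \<in> reach_box x n"
    then have "(\<Sum>z\<in>reach_box x (Suc n). jump_prob Q w z * g z)
        = (\<Sum>z\<in>reach_box x (Suc n).
             (if z = move1 w then prob1 w * g z else 0) + (if z = move2 w then prob2 w * g z else 0))"
      by (intro sum.cong) (auto simp: jump_prob_eq distrib_right)
    also have "\<dots> = prob1 w * g (move1 w) + prob2 w * g (move2 w)"
      using moves_in_reach_box[OF \<open>w \<in> reach_box x n\<close>] moves_distinct(3)[of w]
      by (simp add: sum.distrib finite_reach_box sum.delta')
    finally show "taboo Q x n w * (\<Sum>z\<in>reach_box x (Suc n). jump_prob Q w z * g z)
             = taboo Q x n w * (prob1 w * g (move1 w) + prob2 w * g (move2 w))" by simp
  qed simp
  finally show ?thesis .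
qed

definition potential :: "state \<Rightarrow> real" where
  "potential z = real (fst z) / l1 - real (snd z) / l2"

abbreviation abs_displacement :: "state \<Rightarrow> nat \<Rightarrow> real" where
  "abs_displacement x n \<equiv> taboo_expect x n (\<lambda>z. \<bar>potential z - potential x\<bar>)"

abbreviation sq_displacement :: "state \<Rightarrow> nat \<Rightarrow> real" where
  "sq_displacement x n \<equiv> taboo_expect x n (\<lambda>z. (potential z - potential x)\<^sup>2)"

lemma potential_move1: "potential (move1 w) = potential w + 1 / rate1 w"
  using pull1_queue2_pos[of w] l1_pos l2_pos
  by (cases w) (auto simp: potential_def move1_def rate1_def of_nat_diff diff_divide_distrib add_divide_distrib)

lemma potential_move2: "potential (move2 w) = potential w - 1 / rate2 w"
  using pull2_queue1_pos[of w] l1_pos l2_pos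
  by (cases w) (auto simp: potential_def move2_def rate2_def of_nat_diff diff_divide_distrib add_divide_distrib)

lemma prob_mean: "prob1 w * (c + 1 / rate1 w) + prob2 w * (c - 1 / rate2 w) = c"
  unfolding prob1_def prob2_def by (rule two_point_mean[OF rate1_pos rate2_pos])

lemma prob_second_moment:
  "prob1 w * (c + 1 / rate1 w)\<^sup>2 + prob2 w * (c - 1 / rate2 w)\<^sup>2 = c\<^sup>2 + 1 / (rate1 w * rate2 w)"
  unfolding prob1_def prob2_def by (rule two_point_second_moment[OF rate1_pos rate2_pos])

lemma incseq_abs_displacement: "incseq (abs_displacement x)"
proof (rule incseq_SucI)
  have "\<bar>potential w - potential x\<bar>
      \<le> prob1 w * \<bar>potential (move1 w) - potential x\<bar>
        + prob2 w * \<bar>potential (move2 w) - potential x\<bar>" for w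
  proof -
    let ?c = "potential w - potential x"
    have "\<bar>?c\<bar> = \<bar>prob1 w * (?c + 1 / rate1 w) + prob2 w * (?c - 1 / rate2 w)\<bar>"
      by (simp only: prob_mean)
    also have "\<dots> \<le> prob1 w * \<bar>?c + 1 / rate1 w\<bar> + prob2 w * \<bar>?c - 1 / rate2 w\<bar>"
      using abs_triangle_ineq[of "prob1 w * (?c + 1 / rate1 w)" "prob2 w * (?c - 1 / rate2 w)"]
        prob_nonneg[of w]
      by (simp add: abs_mult)
    finally show ?thesis
      by (simp add: potential_move1 potential_move2 algebra_simps)
  qed
  then show "abs_displacement x n \<le> abs_displacement x (Suc n)" for n
    by (simp add: taboo_expect_Suc taboo_expect_mono)
qed

lemma abs_displacement_pos:
  assumes "n \<ge> 1"
  shows "abs_displacement x n > 0"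
proof -
  have "abs_displacement x (Suc 0) = prob1 x / rate1 x + prob2 x / rate2 x"
    using rate1_pos[of x] rate2_pos[of x] prob_nonneg[of x]
    by (simp add: taboo_expect_Suc taboo_expect_0 potential_move1 potential_move2)
  moreover have "prob1 x / rate1 x + prob2 x / rate2 x > 0"
    using rate1_pos[of x] rate2_pos[of x] by (simp add: prob1_def prob2_def)
  moreover have "abs_displacement x (Suc 0) \<le> abs_displacement x n"
    using assms by (intro incseqD[OF incseq_abs_displacement]) simp
  ultimately show ?thesis by linarith
qed

lemma sq_displacement_Suc:
  "sq_displacement x (Suc n) = sq_displacement x n + taboo_expect x n (\<lambda>w. 1 / (rate1 w * rate2 w))"
proof -
  have "prob1 w * (potential (move1 w) - potential x)\<^sup>2 + prob2 w * (potential (move2 w) - potential x)\<^sup>2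
      = (potential w - potential x)\<^sup>2 + 1 / (rate1 w * rate2 w)" for w
    using prob_second_moment[of w "potential w - potential x"]
    by (simp add: potential_move1 potential_move2 algebra_simps)
  then have "sq_displacement x (Suc n)
      = taboo_expect x n (\<lambda>w. (potential w - potential x)\<^sup>2 + 1 / (rate1 w * rate2 w))"
    by (simp add: taboo_expect_Suc)
  then show ?thesis
    by (simp add: taboo_expect_def distrib_left sum.distrib)
qed

lemma sq_displacement_le: "sq_displacement x n \<le> (\<Sum>k<n. survival x k) / (min l1 l2)\<^sup>2"
proof (induction n)
  case 0
  show ?case by (simp add: taboo_expect_0)
next
  case (Suc n)
  have "1 / (rate1 w * rate2 w) \<le> 1 / (min l1 l2)\<^sup>2" for w
    using rates_ge_min[of w] l1_pos l2_pos
    by (intro divide_left_mono) (auto simp: power2_eq_square intro!: mult_mono)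
  then have "taboo_expect x n (\<lambda>w. 1 / (rate1 w * rate2 w)) \<le> survival x n / (min l1 l2)\<^sup>2"
    using taboo_expect_mono[of "\<lambda>w. 1 / (rate1 w * rate2 w)" "\<lambda>_. 1 / (min l1 l2)\<^sup>2"]
    by (simp add: taboo_expect_def sum_divide_distrib)
  with Suc show ?case
    by (simp add: sq_displacement_Suc add_divide_distrib)
qed

lemma taboo_expect_Cauchy_Schwarz:
  "(taboo_expect x n (\<lambda>z. \<bar>h z\<bar>))\<^sup>2 \<le> survival x n * taboo_expect x n (\<lambda>z. (h z)\<^sup>2)"
  using Cauchy_Schwarz_ineq_sum[of "\<lambda>z. sqrt (taboo Q x n z)" "\<lambda>z. sqrt (taboo Q x n z) * \<bar>h z\<bar>"]
  by (simp add: taboo_expect_def taboo_nonneg power_mult_distrib mult.assoc[symmetric])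

lemma not_summable_survival: "\<not> summable (survival x)"
proof
  assume summable: "summable (survival x)"
  define M where "M = suminf (survival x) / (min l1 l2)\<^sup>2"
  have sq_le_M: "sq_displacement x n \<le> M" for n
  proof -
    have "(\<Sum>k<n. survival x k) \<le> suminf (survival x)"
      by (rule sum_le_suminf[OF summable]) (auto intro: taboo_expect_nonneg)
    then show ?thesis
      unfolding M_def by (intro order_trans[OF sq_displacement_le] divide_right_mono) simp_all
  qed
  have "(\<lambda>n. survival x n * M) \<longlonglongrightarrow> 0"
    using summable_LIMSEQ_zero[OF summable] by (rule tendsto_mult_left_zero)
  moreover have "(abs_displacement x 1)\<^sup>2 > 0"
    using abs_displacement_pos[of 1 x] by simp
  ultimately have "\<forall>\<^sub>F n in sequentially. survival x n * M < (abs_displacement x 1)\<^sup>2"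
    by (rule order_tendstoD(2))
  then obtain N where "\<And>n. n \<ge> N \<Longrightarrow> survival x n * M < (abs_displacement x 1)\<^sup>2"
    unfolding eventually_sequentially by blast
  then obtain n where "n \<ge> 1" and small: "survival x n * M < (abs_displacement x 1)\<^sup>2"
    using max.cobounded1 max.cobounded2 by blast
  have "(abs_displacement x 1)\<^sup>2 \<le> (abs_displacement x n)\<^sup>2"
    using abs_displacement_pos[of 1 x] \<open>n \<ge> 1\<close>
    by (auto intro!: power_mono incseqD[OF incseq_abs_displacement])
  also have "\<dots> \<le> survival x n * sq_displacement x n"
    by (rule taboo_expect_Cauchy_Schwarz)
  also have "\<dots> \<le> survival x n * M"
    by (intro mult_left_mono sq_le_M taboo_expect_nonneg) simp
  finally show False
    using small by simp
qed

lemma survival_le_holding_time: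
  "survival x n \<le> 2 * max l1 l2 * (\<Sum>\<^sub>\<infinity>z. taboo Q x n z / exit_rate Q z)"
proof -
  have "(\<Sum>\<^sub>\<infinity>z. taboo Q x n z / exit_rate Q z) = taboo_expect x n (\<lambda>z. 1 / (rate1 z + rate2 z))"
    by (subst infsum_eq_sum_finite_support[where S = "reach_box x n"])
      (auto simp: finite_reach_box taboo_outside_reach_box taboo_expect_def exit_rate_eq)
  moreover have "1 \<le> 2 * max l1 l2 * (1 / (rate1 z + rate2 z))" for z
    using rate_sum_le[of z] rate1_pos[of z] rate2_pos[of z] by (simp add: field_simps)
  ultimately show ?thesis
    using taboo_expect_mono[of "\<lambda>_. 1" "\<lambda>z. 2 * max l1 l2 * (1 / (rate1 z + rate2 z))"]
    by (simp add: taboo_expect_def sum_distrib_left mult_ac)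
qed

lemma not_positive_recurrent: "\<not> positive_recurrent_state Q x"
proof
  assume "positive_recurrent_state Q x"
  then have "summable (\<lambda>n. 2 * max l1 l2 * (\<Sum>\<^sub>\<infinity>z. taboo Q x n z / exit_rate Q z))"
    by (intro summable_mult) (simp add: positive_recurrent_state_def)
  then have "summable (survival x)"
    by (rule summable_comparison_test') (use survival_le_holding_time taboo_expect_nonneg in auto)
  with not_summable_survival show False ..
qed

end

theorem theorem1:
  fixes l1 l2 m1 m2 :: real
  assumes "l1 > 0" and "l2 > 0" and "m1 > 0" and "m2 > 0"
    and "l1 = m1" and "l2 = m2"
  shows "\<not> stabilizable l1 l2 m1 m2"
proof
  assume "stabilizable l1 l2 m1 m2"
  then obtain P C where P: "non_idling P" and C: "positive_recurrent_class (pp_rate l1 l2 l1 l2 P) C"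
    using assms(5,6) unfolding stabilizable_def stable_process_def by auto
  interpret critical_push_pull l1 l2 P
    using assms(1,2) P by unfold_locales
  from C obtain x where C_eq: "C = {y. accessible Q x y \<and> accessible Q y x}"
    and "\<forall>y\<in>C. positive_recurrent_state Q y"
    unfolding positive_recurrent_class_def by auto
  moreover have "x \<in> C"
    unfolding C_eq accessible_def by simp
  ultimately have "positive_recurrent_state Q x"
    by blast
  with not_positive_recurrent show False by blast
qed

end
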